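(* Let $A\in\mathbb{R}^{n\times d}$, $k\ge1$, and suppose $\lambda:=\|A-A_k\|_F^2/k>0$. Let $C_1\in\mathbb{R}^{n\times d'}$ and $c_1>0$ satisfy $AA^T+\lambda I_n\preceq c_1\,(C_1C_1^T+\lambda I_n)$, and let $Z$ be a matrix with orthonormal columns spanning the column space of $C_1$. Then for every $i=1,\dots,d$, $$\|a_i-ZZ^Ta_i\|_2^2\le c_1\,\lambda\,\bar\tau_i(A).$$
   Context: $A$ has columns $a_1,\dots,a_d$. $A_k$ denotes a best rank-$k$ approximation of $A$ in Frobenius norm. $\preceq$ is the Loewner order and $M^+$ the Moore–Penrose pseudoinverse. The ridge leverage score is $\bar\tau_i(A)=a_i^T\big(AA^T+\frac{\|A-A_k\|_F^2}{k}I_n\big)^+a_i$. *)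

theory Defs
  imports "Jordan_Normal_Form.DL_Rank"
begin

definition frob_norm :: "real mat \<Rightarrow> real" where
  "frob_norm M = sqrt (\<Sum>i<dim_row M. \<Sum>j<dim_col M. (M $$ (i,j))^2)"

definition vec_norm :: "real vec \<Rightarrow> real" where
  "vec_norm v = sqrt (v \<bullet> v)"

definition mat_rank :: "real mat \<Rightarrow> nat" where
  "mat_rank M = vec_space.rank (dim_row M) M"

definition best_rank_approx :: "real mat \<Rightarrow> nat \<Rightarrow> real mat \<Rightarrow> bool" where
  "best_rank_approx A k B \<longleftrightarrow>
     B \<in> carrier_mat (dim_row A) (dim_col A) \<and> mat_rank B \<le> k \<and>
     (\<forall>B' \<in> carrier_mat (dim_row A) (dim_col A).
        mat_rank B' \<le> k \<longrightarrow> frob_norm (A - B) \<le> frob_norm (A - B'))"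

definition loewner_le :: "nat \<Rightarrow> real mat \<Rightarrow> real mat \<Rightarrow> bool" where
  "loewner_le n P Q \<longleftrightarrow> P \<in> carrier_mat n n \<and> Q \<in> carrier_mat n n \<and>
     (\<forall>x \<in> carrier_vec n. x \<bullet> ((Q - P) *\<^sub>v x) \<ge> 0)"

definition pinv :: "real mat \<Rightarrow> real mat" where
  "pinv M = (THE X. X \<in> carrier_mat (dim_col M) (dim_row M) \<and>
      M * X * M = M \<and> X * M * X = X \<and> (M * X)\<^sup>T = M * X \<and> (X * M)\<^sup>T = X * M)"

definition col_space :: "real mat \<Rightarrow> real vec set" where
  "col_space M = {M *\<^sub>v x | x. x \<in> carrier_vec (dim_col M)}"

definition ridge_lev :: "real mat \<Rightarrow> real mat \<Rightarrow> nat \<Rightarrow> nat \<Rightarrow> real" where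
  "ridge_lev A Ak k i =
     col A i \<bullet> (pinv (A * A\<^sup>T + ((frob_norm (A - Ak))^2 / real k) \<cdot>\<^sub>m 1\<^sub>m (dim_row A))
                 *\<^sub>v col A i)"

end

theory Submission
  imports Defs
begin

text \<open>Let \<open>M = AA\<^sup>T + \<lambda>I\<close>, which is positive definite, so \<open>\<tau>\<^sub>i = a\<^sub>i\<^sup>T M\<inverse> a\<^sub>i\<close>, and let
  \<open>y = a\<^sub>i - ZZ\<^sup>Ta\<^sub>i\<close>. Since \<open>y\<close> is orthogonal to the column space of \<open>C\<^sub>1\<close>, the Loewner hypothesis
  gives \<open>y\<^sup>TMy \<le> c\<^sub>1 y\<^sup>T(C\<^sub>1C\<^sub>1\<^sup>T + \<lambda>I)y = c\<^sub>1\<lambda>\<parallel>y\<parallel>\<^sup>2\<close>. On the other hand \<open>y\<^sup>Ta\<^sub>i = \<parallel>y\<parallel>\<^sup>2\<close>, and expanding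
  \<open>0 \<le> (ty - M\<inverse>a\<^sub>i)\<^sup>T M (ty - M\<inverse>a\<^sub>i)\<close> at \<open>t = 1/(c\<^sub>1\<lambda>)\<close> yields \<open>\<parallel>y\<parallel>\<^sup>2 \<le> c\<^sub>1\<lambda>\<tau>\<^sub>i\<close>.\<close>

lemma scalar_prod_self_nonneg: "0 \<le> (v :: real vec) \<bullet> v"
  using conjugate_square_ge_0_vec[of v] by simp

lemma scalar_prod_self_eq_0_iff:
  "(v :: real vec) \<in> carrier_vec n \<Longrightarrow> v \<bullet> v = 0 \<longleftrightarrow> v = 0\<^sub>v n"
  using conjugate_square_eq_0_vec[of v n] by simp

lemma smult_mat_mult_vec:
  assumes "(A :: real mat) \<in> carrier_mat nr nc" "v \<in> carrier_vec nc"
  shows "(c \<cdot>\<^sub>m A) *\<^sub>v v = c \<cdot>\<^sub>v (A *\<^sub>v v)"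
  using assms by (intro eq_vecI) auto

lemma loewner_le_quadratic_form:
  assumes PQ: "loewner_le n P Q" and x: "x \<in> carrier_vec n"
  shows "x \<bullet> (P *\<^sub>v x) \<le> x \<bullet> (Q *\<^sub>v x)"
proof -
  have P: "P \<in> carrier_mat n n" and Q: "Q \<in> carrier_mat n n"
    using PQ unfolding loewner_le_def by auto
  have "0 \<le> x \<bullet> ((Q - P) *\<^sub>v x)" using PQ x unfolding loewner_le_def by blast
  also have "\<dots> = x \<bullet> (Q *\<^sub>v x) - x \<bullet> (P *\<^sub>v x)"
    using P Q x by (simp add: minus_mult_distrib_mat_vec[OF Q P x] scalar_prod_minus_distrib[of _ n])
  finally show ?thesis by simp
qed

lemma vec_norm_sq: "(vec_norm v)\<^sup>2 = v \<bullet> v"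
  unfolding vec_norm_def using scalar_prod_self_nonneg[of v] by simp

lemma pinv_eq_inverse:
  assumes M: "M \<in> carrier_mat n n" and B: "B \<in> carrier_mat n n"
    and BM: "B * M = 1\<^sub>m n" and MB: "M * B = 1\<^sub>m n"
  shows "pinv M = B"
  unfolding pinv_def
proof (rule the_equality)
  show "B \<in> carrier_mat (dim_col M) (dim_row M) \<and> M * B * M = M \<and> B * M * B = B \<and>
      (M * B)\<^sup>T = M * B \<and> (B * M)\<^sup>T = B * M"
    using M B MB BM by auto
next
  fix X assume X: "X \<in> carrier_mat (dim_col M) (dim_row M) \<and> M * X * M = M \<and> X * M * X = X \<and>
      (M * X)\<^sup>T = M * X \<and> (X * M)\<^sup>T = X * M"
  hence Xc: "X \<in> carrier_mat n n" using M by auto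
  have "X = (B * M) * X * (M * B)" using BM MB Xc by simp
  also have "\<dots> = B * (M * X * M) * B"
    using B M Xc by (simp add: assoc_mult_mat[of _ n n _ n _ n])
  also have "\<dots> = B" using X BM B by simp
  finally show "X = B" .
qed

definition ridge_mat :: "real mat \<Rightarrow> real \<Rightarrow> real mat" where
  "ridge_mat C lam = C * C\<^sup>T + lam \<cdot>\<^sub>m 1\<^sub>m (dim_row C)"

lemma ridge_mat_carrier: "C \<in> carrier_mat n d \<Longrightarrow> ridge_mat C lam \<in> carrier_mat n n"
  unfolding ridge_mat_def by auto

lemma transpose_ridge_mat:
  assumes "C \<in> carrier_mat n d"
  shows "(ridge_mat C lam)\<^sup>T = ridge_mat C lam"
proof -
  have "(lam \<cdot>\<^sub>m 1\<^sub>m n)\<^sup>T = lam \<cdot>\<^sub>m 1\<^sub>m n" by (intro eq_matI) auto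
  thus ?thesis
    using assms by (simp add: ridge_mat_def transpose_add[of _ n n] transpose_mult[of _ n d])
qed

lemma ridge_mat_mult_vec:
  assumes "C \<in> carrier_mat n d" "x \<in> carrier_vec n"
  shows "ridge_mat C lam *\<^sub>v x = C *\<^sub>v (C\<^sup>T *\<^sub>v x) + lam \<cdot>\<^sub>v x"
  unfolding ridge_mat_def using assms
  by (simp add: add_mult_distrib_mat_vec[of _ n n] smult_mat_mult_vec[of _ n n])

lemma ridge_mat_quadratic_form:
  assumes C: "C \<in> carrier_mat n d" and x: "x \<in> carrier_vec n"
  shows "x \<bullet> (ridge_mat C lam *\<^sub>v x) = (C\<^sup>T *\<^sub>v x) \<bullet> (C\<^sup>T *\<^sub>v x) + lam * (x \<bullet> x)"
proof -
  have "x \<bullet> (ridge_mat C lam *\<^sub>v x) = x \<bullet> (C *\<^sub>v (C\<^sup>T *\<^sub>v x)) + x \<bullet> (lam \<cdot>\<^sub>v x)"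
    using C x by (simp add: ridge_mat_mult_vec scalar_prod_add_distrib[of _ n])
  also have "x \<bullet> (C *\<^sub>v (C\<^sup>T *\<^sub>v x)) = (C\<^sup>T *\<^sub>v x) \<bullet> (C\<^sup>T *\<^sub>v x)"
    using transpose_vec_mult_scalar[OF C _ x, of "C\<^sup>T *\<^sub>v x"] C x by auto
  finally show ?thesis using x by simp
qed

lemma ridge_mat_psd:
  assumes "C \<in> carrier_mat n d" "x \<in> carrier_vec n" "lam \<ge> 0"
  shows "0 \<le> x \<bullet> (ridge_mat C lam *\<^sub>v x)"
  using assms scalar_prod_self_nonneg[of x] scalar_prod_self_nonneg[of "C\<^sup>T *\<^sub>v x"]
  by (simp add: ridge_mat_quadratic_form)

lemma ridge_mat_invertible:
  assumes C: "C \<in> carrier_mat n d" and lam: "lam > 0"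
  obtains B where "B \<in> carrier_mat n n" "B * ridge_mat C lam = 1\<^sub>m n" "ridge_mat C lam * B = 1\<^sub>m n"
proof -
  let ?M = "ridge_mat C lam"
  have M: "?M \<in> carrier_mat n n" using C by (rule ridge_mat_carrier)
  have "det ?M \<noteq> 0"
  proof
    assume "det ?M = 0"
    then obtain v where v: "v \<in> carrier_vec n" "v \<noteq> 0\<^sub>v n" "?M *\<^sub>v v = 0\<^sub>v n"
      using det_0_iff_vec_prod_zero[OF M] by auto
    have "(C\<^sup>T *\<^sub>v v) \<bullet> (C\<^sup>T *\<^sub>v v) + lam * (v \<bullet> v) = 0"
      using v ridge_mat_quadratic_form[OF C v(1), of lam] by simp
    hence "v \<bullet> v = 0"
      using scalar_prod_self_nonneg[of v] scalar_prod_self_nonneg[of "C\<^sup>T *\<^sub>v v"] lam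
      by (smt (verit) mult_pos_pos)
    thus False using scalar_prod_self_eq_0_iff[OF v(1)] v(2) by simp
  qed
  hence "?M \<in> Units (ring_mat TYPE(real) n ())"
    by (rule det_non_zero_imp_unit[OF M])
  thus thesis using that unfolding Units_def by (auto simp: ring_mat_simps)
qed

lemma ridge_mat_pinv:
  assumes C: "C \<in> carrier_mat n d" and lam: "lam > 0"
  shows "pinv (ridge_mat C lam) \<in> carrier_mat n n"
    and "ridge_mat C lam * pinv (ridge_mat C lam) = 1\<^sub>m n"
proof -
  obtain B where "B \<in> carrier_mat n n" "B * ridge_mat C lam = 1\<^sub>m n" "ridge_mat C lam * B = 1\<^sub>m n"
    using ridge_mat_invertible[OF C lam] .
  with pinv_eq_inverse[OF ridge_mat_carrier[OF C]] show
    "pinv (ridge_mat C lam) \<in> carrier_mat n n" "ridge_mat C lam * pinv (ridge_mat C lam) = 1\<^sub>m n"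
    by auto
qed

text \<open>The variational form of \<open>(y\<^sup>Ta)\<^sup>2 \<le> (y\<^sup>TMy)(a\<^sup>TM\<inverse>a)\<close>, from \<open>0 \<le> (ty - w)\<^sup>TM(ty - w)\<close>.\<close>

lemma psd_solution_bound:
  fixes M :: "real mat"
  assumes M: "M \<in> carrier_mat n n" and sym: "M\<^sup>T = M"
    and psd: "\<And>x. x \<in> carrier_vec n \<Longrightarrow> 0 \<le> x \<bullet> (M *\<^sub>v x)"
    and w: "w \<in> carrier_vec n" and Mw: "M *\<^sub>v w = a" and y: "y \<in> carrier_vec n"
  shows "2 * t * (y \<bullet> a) \<le> t\<^sup>2 * (y \<bullet> (M *\<^sub>v y)) + w \<bullet> a"
proof -
  have a: "a \<in> carrier_vec n" using M w Mw by auto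
  have My: "M *\<^sub>v y \<in> carrier_vec n" using M y by simp
  have wMy: "w \<bullet> (M *\<^sub>v y) = y \<bullet> a"
    using transpose_vec_mult_scalar[OF M y w] sym Mw comm_scalar_prod[OF a y] by simp
  have "M *\<^sub>v (t \<cdot>\<^sub>v y - w) = t \<cdot>\<^sub>v (M *\<^sub>v y) - a"
    using M y w Mw by (simp add: mult_minus_distrib_mat_vec[of _ n n] mult_mat_vec[of _ n n])
  hence "(t \<cdot>\<^sub>v y - w) \<bullet> (M *\<^sub>v (t \<cdot>\<^sub>v y - w))
      = t\<^sup>2 * (y \<bullet> (M *\<^sub>v y)) - t * (y \<bullet> a) - t * (w \<bullet> (M *\<^sub>v y)) + w \<bullet> a"
    using y w a My
    by (simp add: minus_scalar_prod_distrib[of _ n] scalar_prod_minus_distrib[of _ n]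
        algebra_simps power2_eq_square)
  moreover have "0 \<le> (t \<cdot>\<^sub>v y - w) \<bullet> (M *\<^sub>v (t \<cdot>\<^sub>v y - w))" using y w by (intro psd) auto
  ultimately show ?thesis using wMy by simp
qed

lemma psd_solution_residual_bound:
  fixes M :: "real mat"
  assumes M: "M \<in> carrier_mat n n" and sym: "M\<^sup>T = M"
    and psd: "\<And>x. x \<in> carrier_vec n \<Longrightarrow> 0 \<le> x \<bullet> (M *\<^sub>v x)"
    and w: "w \<in> carrier_vec n" and Mw: "M *\<^sub>v w = a" and y: "y \<in> carrier_vec n"
    and ya: "y \<bullet> a = y \<bullet> y" and yMy: "y \<bullet> (M *\<^sub>v y) \<le> c * (y \<bullet> y)" and c: "c > 0"
  shows "y \<bullet> y \<le> c * (w \<bullet> a)"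
proof -
  define t where "t = 1 / c"
  have "2 * t * (y \<bullet> y) \<le> t\<^sup>2 * (y \<bullet> (M *\<^sub>v y)) + w \<bullet> a"
    using psd_solution_bound[OF M sym psd w Mw y] ya by simp
  also have "\<dots> \<le> t\<^sup>2 * (c * (y \<bullet> y)) + w \<bullet> a"
    using yMy by (simp add: mult_left_mono)
  also have "t\<^sup>2 * (c * (y \<bullet> y)) = t * (y \<bullet> y)"
    using c by (simp add: t_def power2_eq_square)
  finally show ?thesis using c by (simp add: t_def field_simps)
qed

lemma orthonormal_projection_residual:
  fixes Z :: "real mat"
  assumes Z: "Z \<in> carrier_mat n m" and orth: "Z\<^sup>T * Z = 1\<^sub>m m" and a: "a \<in> carrier_vec n"
  defines "y \<equiv> a - (Z * Z\<^sup>T) *\<^sub>v a"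
  shows "Z\<^sup>T *\<^sub>v y = 0\<^sub>v m" and "y \<bullet> a = y \<bullet> y"
proof -
  define za where "za = Z\<^sup>T *\<^sub>v a"
  have za: "za \<in> carrier_vec m" unfolding za_def using Z a by auto
  have y_eq: "y = a - Z *\<^sub>v za" unfolding y_def za_def using Z a by simp
  have yc: "y \<in> carrier_vec n" unfolding y_eq using Z a za by auto
  have "Z\<^sup>T *\<^sub>v y = za - Z\<^sup>T *\<^sub>v (Z *\<^sub>v za)"
    unfolding y_eq using Z a za by (simp add: mult_minus_distrib_mat_vec[of "Z\<^sup>T" m n] za_def)
  also have "Z\<^sup>T *\<^sub>v (Z *\<^sub>v za) = za"
    using Z za orth by (simp flip: assoc_mult_mat_vec)
  finally show ZTy: "Z\<^sup>T *\<^sub>v y = 0\<^sub>v m" using za by simp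
  have "y \<bullet> (Z *\<^sub>v za) = 0"
    using transpose_vec_mult_scalar[OF Z za yc] ZTy za by simp
  moreover have "a = y + Z *\<^sub>v za" unfolding y_eq using a Z za by auto
  ultimately show "y \<bullet> a = y \<bullet> y"
    using yc Z za by (simp add: scalar_prod_add_distrib[of _ n])
qed

lemma transpose_mult_vec_eq_0_if_col_space_subset:
  fixes C Z :: "real mat"
  assumes C: "C \<in> carrier_mat n d" and Z: "Z \<in> carrier_mat n m"
    and sub: "col_space C \<subseteq> col_space Z" and y: "y \<in> carrier_vec n"
    and ZTy: "Z\<^sup>T *\<^sub>v y = 0\<^sub>v m"
  shows "C\<^sup>T *\<^sub>v y = 0\<^sub>v d"
proof (rule eq_vecI)
  show "dim_vec (C\<^sup>T *\<^sub>v y) = dim_vec (0\<^sub>v d)" using C by simp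
  fix j assume "j < dim_vec (0\<^sub>v d)"
  hence j: "j < d" by simp
  have e: "unit_vec d j \<in> carrier_vec d" by simp
  have "C *\<^sub>v unit_vec d j \<in> col_space C"
    using C e unfolding col_space_def by auto
  then obtain x where x: "x \<in> carrier_vec m" and Cx: "C *\<^sub>v unit_vec d j = Z *\<^sub>v x"
    using sub Z unfolding col_space_def by auto
  have "(C\<^sup>T *\<^sub>v y) $ j = y \<bullet> (C *\<^sub>v unit_vec d j)"
    using transpose_vec_mult_scalar[OF C e y] C y j by simp
  also have "\<dots> = (Z\<^sup>T *\<^sub>v y) \<bullet> x" unfolding Cx using transpose_vec_mult_scalar[OF Z x y] by simp
  also have "\<dots> = 0" using ZTy x by simp
  finally show "(C\<^sup>T *\<^sub>v y) $ j = 0\<^sub>v d $ j" using j by simp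
qed

theorem mainTheorem5:
  fixes A Ak C1 Z :: "real mat" and n d d' m k :: nat and c1 lam :: real
  assumes "A \<in> carrier_mat n d"
    and "k \<ge> 1"
    and "best_rank_approx A k Ak"
    and "lam = (frob_norm (A - Ak))^2 / real k"
    and "lam > 0"
    and "C1 \<in> carrier_mat n d'"
    and "c1 > 0"
    and "loewner_le n (A * A\<^sup>T + lam \<cdot>\<^sub>m 1\<^sub>m n) (c1 \<cdot>\<^sub>m (C1 * C1\<^sup>T + lam \<cdot>\<^sub>m 1\<^sub>m n))"
    and "Z \<in> carrier_mat n m"
    and "Z\<^sup>T * Z = 1\<^sub>m m"
    and "col_space Z = col_space C1"
    and "i < d"
  shows "(vec_norm (col A i - (Z * Z\<^sup>T) *\<^sub>v col A i))^2 \<le> c1 * lam * ridge_lev A Ak k i"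
proof -
  note A = assms(1) and lam = assms(5) and C1 = assms(6) and Z = assms(9)
  define M where "M = ridge_mat A lam"
  have M: "M \<in> carrier_mat n n" unfolding M_def using A by (rule ridge_mat_carrier)
  define a where "a = col A i"
  define w where "w = pinv M *\<^sub>v a"
  have a: "a \<in> carrier_vec n" unfolding a_def using A assms(12) by auto
  have w: "w \<in> carrier_vec n" unfolding w_def using ridge_mat_pinv(1)[OF A lam] a M_def by auto
  have Mw: "M *\<^sub>v w = a"
    unfolding w_def M_def using ridge_mat_pinv[OF A lam] a
      assoc_mult_mat_vec[OF ridge_mat_carrier[OF A, of lam] ridge_mat_pinv(1)[OF A lam] a]
    by simp
  have ridge: "ridge_lev A Ak k i = w \<bullet> a"
    using A comm_scalar_prod[OF a w]
    by (simp add: ridge_lev_def M_def ridge_mat_def a_def w_def flip: assms(4))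
  define y where "y = a - (Z * Z\<^sup>T) *\<^sub>v a"
  have y: "y \<in> carrier_vec n" unfolding y_def using Z a by auto
  have ZTy: "Z\<^sup>T *\<^sub>v y = 0\<^sub>v m" and ya: "y \<bullet> a = y \<bullet> y"
    using orthonormal_projection_residual[OF Z assms(10) a] unfolding y_def by auto
  have "C1\<^sup>T *\<^sub>v y = 0\<^sub>v d'"
    using transpose_mult_vec_eq_0_if_col_space_subset[OF C1 Z _ y ZTy] assms(11) by simp
  hence "y \<bullet> (ridge_mat C1 lam *\<^sub>v y) = lam * (y \<bullet> y)"
    using ridge_mat_quadratic_form[OF C1 y] by simp
  hence yMy: "y \<bullet> (M *\<^sub>v y) \<le> c1 * lam * (y \<bullet> y)"
    using loewner_le_quadratic_form[OF assms(8) y] A C1 y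
    by (simp add: M_def mult.assoc ridge_mat_def smult_mat_mult_vec[of _ n n])
  have "y \<bullet> y \<le> c1 * lam * (w \<bullet> a)"
    using psd_solution_residual_bound[OF M _ _ w Mw y ya yMy] transpose_ridge_mat[OF A]
      ridge_mat_psd[OF A] lam assms(7) by (simp add: M_def)
  thus ?thesis using ridge vec_norm_sq[of y] unfolding y_def a_def by simp
qed
end
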